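(* Let $D$ be a direct tract of $f$, let $M_D(r)=\max_{|z|=r,\,z\in D}|f(z)|$, and let $\rho_0>R$ be such that $M_D(\rho)>\rho$ for all $\rho>\rho_0$. Then for every $\rho>\rho_0$ all components of $$A(f,D,\rho)=\{z\in D: f^n(z)\in D\text{ and }|f^n(z)|\ge M_D^n(\rho)\text{ for all }n\in\mathbb{N}\}$$ are unbounded.
   Context: A direct tract of $f$: $D$ is an unbounded domain with piecewise smooth boundary curves and unbounded complement; $f$ is defined on $\overline{D}$, holomorphic in $D$, continuous on $\overline{D}$, and there is $R>0$ with $|f|=R$ on $\partial D$ and $|f|>R$ in $D$. $M_D^n$ denotes the $n$-th iterate of $M_D$. *)

theory Defs
  imports "HOL-Complex_Analysis.Complex_Analysis"
begin

text \<open>Each boundary component of D is a curve, parametrized over the real line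
(covering both unbounded arcs and closed curves), that is piecewise smooth
on every compact parameter interval.\<close>
definition piecewise_smooth_boundary :: "complex set \<Rightarrow> bool" where
  "piecewise_smooth_boundary D \<longleftrightarrow>
     (\<forall>C \<in> components (frontier D). \<exists>\<gamma> :: real \<Rightarrow> complex.
        range \<gamma> = C \<and> (\<forall>a b. \<gamma> piecewise_C1_differentiable_on {a..b}))"

definition direct_tract :: "(complex \<Rightarrow> complex) \<Rightarrow> complex set \<Rightarrow> real \<Rightarrow> bool" where
  "direct_tract f D R \<longleftrightarrow>
     open D \<and> connected D \<and> \<not> bounded D \<and> \<not> bounded (- D) \<and>
     piecewise_smooth_boundary D \<and>
     f holomorphic_on D \<and> continuous_on (closure D) f \<and>
     R > 0 \<and> (\<forall>z \<in> frontier D. norm (f z) = R) \<and> (\<forall>z \<in> D. norm (f z) > R)"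

definition MD :: "(complex \<Rightarrow> complex) \<Rightarrow> complex set \<Rightarrow> real \<Rightarrow> real" where
  "MD f D r = Sup ((\<lambda>z. norm (f z)) ` (D \<inter> sphere 0 r))"

definition A_tract :: "(complex \<Rightarrow> complex) \<Rightarrow> complex set \<Rightarrow> real \<Rightarrow> complex set" where
  "A_tract f D \<rho> = {z \<in> D. \<forall>n::nat. n \<ge> 1 \<longrightarrow>
       (f ^^ n) z \<in> D \<and> norm ((f ^^ n) z) \<ge> (MD f D ^^ n) \<rho>}"

end

theory Submission
  imports Defs
begin

(*
  Suppose a component C of A(f, D, \<rho>) were bounded. A is closed, so C can be enclosed in a
  bounded open set U whose frontier misses A. Writing \<mu>\<^sub>n = M\<^sub>D\<^sup>n(\<rho>), the set A is the decreasing
  intersection of the closed sets where the first m + 1 iterates stay in the closure of D with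
  |f\<^sup>k| \<ge> \<mu>\<^sub>k - \<epsilon>\<^sub>m, \<epsilon>\<^sub>m \<rightarrow> 0; by compactness one of them already misses the frontier of U.
  On the component W of the corresponding open condition (strict inequalities) inside U that
  contains a point z\<^sub>0 of C, every frontier point violates some inequality |f\<^sup>k| > \<mu>\<^sub>k - \<epsilon>\<^sub>m,
  and the strict maximum modulus bound |f(w)| < M\<^sub>D(r) for w \<in> D, |w| < r propagates this to
  |f\<^sup>m\<^sup>+\<^sup>1| < \<mu>\<^sub>m\<^sub>+\<^sub>1 on the frontier of W. The maximum modulus principle on W then contradicts
  |f\<^sup>m\<^sup>+\<^sup>1(z\<^sub>0)| \<ge> \<mu>\<^sub>m\<^sub>+\<^sub>1.
*)

lemma compact_component_separated:
  fixes A :: "'a::euclidean_space set"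
  assumes "closed A" "C \<in> components A" "compact C"
  obtains U where "open U" "bounded U" "C \<subseteq> U" "frontier U \<inter> A = {}"
proof -
  obtain K where K: "openin (top_of_set A) K" "compact K" "C \<subseteq> K"
    using Sura_Bura_clopen_subset[OF closed_imp_locally_compact[OF assms(1)] assms(2,3) open_UNIV]
    by auto
  have "closedin (top_of_set A) (A - K)"
    using K(1) by (simp add: closedin_diff)
  then have "closed (A - K)"
    using assms(1) closedin_closed_trans by blast
  then obtain U V where UV: "open U" "compact (closure U)" "open V" "K \<subseteq> U" "A - K \<subseteq> V" "U \<inter> V = {}"
    using separation_normal_compact[OF K(2)] by blast
  have "V \<inter> closure U = {}"
    using UV open_Int_closure_eq_empty[of V U] by blast
  then have "frontier U \<inter> A = {}"
    using UV by (auto simp: frontier_def interior_open)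
  moreover have "bounded U"
    by (rule bounded_subset[OF compact_imp_bounded[OF UV(2)] closure_subset])
  ultimately show thesis
    using that UV K(3) by blast
qed

lemma compact_disjoint_from_some_nest:
  fixes F :: "nat \<Rightarrow> 'a::heine_borel set"
  assumes "compact K" "\<And>m. closed (F m)" "\<And>m n. m \<le> n \<Longrightarrow> F n \<subseteq> F m"
    and "K \<inter> (\<Inter>m. F m) = {}"
  obtains m where "K \<inter> F m = {}"
proof -
  have "\<Inter>(range (\<lambda>m. K \<inter> F m)) \<noteq> {}" if "\<And>m. K \<inter> F m \<noteq> {}"
    using assms that by (intro compact_nest) (auto intro: closed_Int_compact)
  with assms(4) that show thesis by blast
qed

lemma maximum_modulus_frontier_less:
  assumes "g holomorphic_on W" "open W" "bounded W" "continuous_on (closure W) g"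
    and "\<And>z. z \<in> frontier W \<Longrightarrow> norm (g z) < B" "\<xi> \<in> W"
  shows "norm (g \<xi>) < B"
proof -
  have "W \<noteq> UNIV"
    using assms(3) not_bounded_UNIV by metis
  then have ne: "frontier W \<noteq> {}"
    using assms(6) frontier_not_empty by blast
  have "continuous_on (frontier W) (\<lambda>z. norm (g z))"
    by (intro continuous_on_norm continuous_on_subset[OF assms(4)]) (auto simp: frontier_def)
  then obtain p where p: "p \<in> frontier W" "\<And>z. z \<in> frontier W \<Longrightarrow> norm (g z) \<le> norm (g p)"
    using continuous_attains_sup[OF compact_frontier_bounded[OF assms(3)] ne] by blast
  have "norm (g \<xi>) \<le> norm (g p)"
    by (rule maximum_modulus_frontier[of g W]) (use assms(1-4,6) p(2) in \<open>simp_all add: interior_open\<close>)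
  with assms(5)[OF p(1)] show ?thesis by simp
qed

lemma funpow_ge_start:
  fixes g :: "real \<Rightarrow> real"
  assumes "\<And>x. a < x \<Longrightarrow> x < g x" "a < b"
  shows "b \<le> (g ^^ n) b"
proof (induction n)
  case (Suc n)
  then have "(g ^^ n) b < g ((g ^^ n) b)"
    using assms by (intro assms(1)) linarith
  with Suc show ?case by simp
qed simp

definition iterates_in :: "('a \<Rightarrow> 'a) \<Rightarrow> 'a set \<Rightarrow> nat \<Rightarrow> 'a set" where
  "iterates_in f S n = {z. \<forall>k\<le>n. (f ^^ k) z \<in> S}"

lemma iterates_in_Suc: "iterates_in f S (Suc n) = iterates_in f S n \<inter> (f ^^ Suc n) -` S"
  unfolding iterates_in_def by (auto simp: le_Suc_eq simp del: funpow.simps)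

lemma iterates_in_mono: "S \<subseteq> T \<Longrightarrow> iterates_in f S n \<subseteq> iterates_in f T n"
  unfolding iterates_in_def by auto

lemma iterates_in_antimono: "m \<le> n \<Longrightarrow> iterates_in f S n \<subseteq> iterates_in f S m"
  unfolding iterates_in_def by auto

lemma continuous_on_funpow_iterates_in:
  assumes "continuous_on S f" "k \<le> Suc n"
  shows "continuous_on (iterates_in f S n) (f ^^ k)"
  using assms(2)
proof (induction k)
  case (Suc k)
  have "(f ^^ k) ` iterates_in f S n \<subseteq> S"
    using Suc.prems by (auto simp: iterates_in_def)
  then have "continuous_on (iterates_in f S n) (f \<circ> f ^^ k)"
    using Suc by (intro continuous_on_compose continuous_on_subset[OF assms(1)]) auto
  then show ?case by (simp only: funpow.simps(2))
qed (simp add: continuous_on_id id_def)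

lemma holomorphic_on_funpow_iterates_in:
  assumes "f holomorphic_on S" "k \<le> Suc n"
  shows "(f ^^ k) holomorphic_on iterates_in f S n"
  using assms(2)
proof (induction k)
  case (Suc k)
  have "(f ^^ k) ` iterates_in f S n \<subseteq> S"
    using Suc.prems by (auto simp: iterates_in_def)
  then have "(f \<circ> f ^^ k) holomorphic_on iterates_in f S n"
    using Suc by (intro holomorphic_on_compose_gen[OF _ assms(1)]) auto
  then show ?case by (simp only: funpow.simps(2))
qed (simp add: holomorphic_on_ident id_def)

lemma open_iterates_in:
  assumes "open S" "continuous_on S f"
  shows "open (iterates_in f S n)"
proof (induction n)
  case 0 then show ?case using assms(1) by (simp add: iterates_in_def)
next
  case (Suc n)
  then show ?case
    unfolding iterates_in_Suc
    by (intro continuous_open_preimage continuous_on_funpow_iterates_in assms) auto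
qed

lemma closed_iterates_in:
  assumes "closed S" "continuous_on S f"
  shows "closed (iterates_in f S n)"
proof (induction n)
  case 0 then show ?case using assms(1) by (simp add: iterates_in_def)
next
  case (Suc n)
  then show ?case
    unfolding iterates_in_Suc
    by (intro continuous_closed_preimage continuous_on_funpow_iterates_in assms) auto
qed

lemma direct_tractD:
  assumes "direct_tract f D R"
  shows "open D" "connected D" "f holomorphic_on D" "continuous_on (closure D) f"
    "\<And>z. z \<in> frontier D \<Longrightarrow> norm (f z) = R" "\<not> bounded D" "\<not> bounded (- D)"
  using assms unfolding direct_tract_def by auto

lemma direct_tract_closure_mem:
  assumes "direct_tract f D R" "w \<in> closure D" "R < norm (f w)"
  shows "w \<in> D"
proof (rule ccontr)
  assume "w \<notin> D"
  with assms(2) have "w \<in> frontier D"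
    by (simp add: frontier_def interior_open direct_tractD(1)[OF assms(1)])
  with assms show False
    using direct_tractD(5)[OF assms(1)] by force
qed

lemma bdd_above_MD_image:
  assumes "direct_tract f D R"
  shows "bdd_above ((\<lambda>z. norm (f z)) ` (D \<inter> sphere 0 r))"
proof -
  have "compact ((\<lambda>z. norm (f z)) ` (closure D \<inter> sphere 0 r))"
    using direct_tractD(4)[OF assms]
    by (intro compact_continuous_image continuous_on_norm closed_Int_compact)
       (auto intro: continuous_on_subset)
  then show ?thesis
    by (rule bdd_above_mono[OF bounded_imp_bdd_above[OF compact_imp_bounded]])
       (use closure_subset in auto)
qed

lemma direct_tract_norm_le_MD:
  assumes "direct_tract f D R" "R < MD f D r" "z \<in> D" "norm z \<le> r"
  shows "norm (f z) \<le> MD f D r"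
proof -
  have on_sphere: "norm (f w) \<le> MD f D r" if "w \<in> D" "norm w = r" for w
    unfolding MD_def using that by (intro cSup_upper bdd_above_MD_image[OF assms(1)]) auto
  let ?S = "D \<inter> ball 0 r"
  show ?thesis
  proof (cases "norm z = r")
    case False
    show ?thesis
    proof (rule maximum_modulus_frontier[of f ?S])
      show "f holomorphic_on interior ?S" "continuous_on (closure ?S) f"
        using direct_tractD[OF assms(1)] closure_mono[of ?S D]
        by (auto simp: interior_open open_Int intro: holomorphic_on_subset continuous_on_subset)
      show "z \<in> ?S" using assms False by auto
    next
      fix w assume w: "w \<in> frontier ?S"
      have "closure ?S \<subseteq> cball 0 r" by (rule closure_minimal) auto
      then have "w \<in> closure D" "norm w \<le> r"
        using w closure_mono[of ?S D] by (auto simp: frontier_def)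
      moreover have "w \<notin> ?S"
        using w direct_tractD(1)[OF assms(1)] by (simp add: frontier_def interior_open open_Int)
      ultimately show "norm (f w) \<le> MD f D r"
        using on_sphere[of w] direct_tract_closure_mem[OF assms(1), of w] assms(2) by force
    qed auto
  qed (use on_sphere assms in auto)
qed

text \<open>Since \<open>|f| = R < M\<^sub>D(r)\<close> on the frontier of \<open>D\<close>, equality would make \<open>f\<close> constant on \<open>D\<close>,
  contradicting the continuity of \<open>f\<close> up to that frontier.\<close>
lemma direct_tract_norm_less_MD:
  assumes "direct_tract f D R" "R < MD f D r" "z \<in> D" "norm z < r"
  shows "norm (f z) < MD f D r"
proof (rule ccontr)
  assume "\<not> ?thesis"
  then have max: "MD f D r \<le> norm (f z)" by simp
  note tract = direct_tractD[OF assms(1)]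
  have "f constant_on D"
    using assms max direct_tract_norm_le_MD[OF assms(1,2)]
    by (intro maximum_modulus_principle[of f D "D \<inter> ball 0 r" z])
       (force simp: open_Int tract(1,2,3))+
  then obtain c where c: "\<And>w. w \<in> D \<Longrightarrow> f w = c" by (auto simp: constant_on_def)
  have "D \<noteq> {}" "D \<noteq> UNIV" using tract(6,7) by auto
  then obtain p where p: "p \<in> frontier D" using frontier_not_empty by blast
  then have "f p = c"
    using continuous_constant_on_closure[OF tract(4) c] by (simp add: frontier_def)
  with tract(5)[OF p] c[OF assms(3)] max assms(2) show False by simp
qed

locale tract_escape =
  fixes f :: "complex \<Rightarrow> complex" and D :: "complex set" and R \<rho>0 \<rho> :: real
  assumes tract: "direct_tract f D R"
    and R_less: "R < \<rho>0"
    and MD_gt: "\<And>r. \<rho>0 < r \<Longrightarrow> r < MD f D r"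
    and start: "\<rho>0 < \<rho>"
begin

abbreviation \<mu> :: "nat \<Rightarrow> real" where "\<mu> n \<equiv> (MD f D ^^ n) \<rho>"

lemma le_\<mu>: "\<rho> \<le> \<mu> n"
  using funpow_ge_start[of \<rho>0 "MD f D"] MD_gt start by blast

lemma R_less_MD_\<mu>: "R < MD f D (\<mu> n)"
  using MD_gt[of "\<mu> n"] le_\<mu>[of n] start R_less by linarith

text \<open>The slack \<open>\<epsilon> m\<close> lets the open sets \<open>A_nbhd U m\<close> contain \<open>A \<inter> U\<close> while their closures stay in
  the closed sets \<open>A_approx m\<close>; being below \<open>\<rho> - R\<close> it keeps all orbit points in \<open>D\<close>.\<close>

definition \<epsilon> :: "nat \<Rightarrow> real" where "\<epsilon> m = (\<rho> - R) / real (m + 2)"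

lemma \<epsilon>_pos: "0 < \<epsilon> m"
  using start R_less by (simp add: \<epsilon>_def)

lemma R_less_\<mu>_minus_\<epsilon>: "R < \<mu> k - \<epsilon> m"
proof -
  have "\<epsilon> m < \<rho> - R"
    using start R_less by (simp add: \<epsilon>_def divide_less_eq)
  then show ?thesis using le_\<mu>[of k] by linarith
qed

lemma \<epsilon>_antimono: "m \<le> n \<Longrightarrow> \<epsilon> n \<le> \<epsilon> m"
  using start R_less by (simp add: \<epsilon>_def frac_le)

lemma \<epsilon>_tendsto_0: "\<epsilon> \<longlonglongrightarrow> 0"
  unfolding \<epsilon>_def by real_asymp


definition A_approx :: "nat \<Rightarrow> complex set" where
  "A_approx m = {z \<in> iterates_in f (closure D) m. \<forall>k\<in>{1..Suc m}. \<mu> k - \<epsilon> m \<le> norm ((f ^^ k) z)}"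

lemma A_approx_iterates_in_D:
  assumes "z \<in> A_approx m"
  shows "z \<in> iterates_in f D m"
  unfolding iterates_in_def
proof (intro CollectI allI impI)
  fix k assume "k \<le> m"
  with assms have "(f ^^ k) z \<in> closure D" "\<mu> (Suc k) - \<epsilon> m \<le> norm ((f ^^ Suc k) z)"
    unfolding A_approx_def iterates_in_def by (auto simp del: funpow.simps)
  moreover have "R < norm ((f ^^ Suc k) z)"
    using R_less_\<mu>_minus_\<epsilon>[of "Suc k" m] calculation(2) by linarith
  ultimately show "(f ^^ k) z \<in> D"
    by (intro direct_tract_closure_mem[OF tract]) simp_all
qed

lemma closed_A_approx: "closed (A_approx m)"
proof -
  let ?P = "iterates_in f (closure D) m"
  have P: "closed ?P"
    using direct_tractD(4)[OF tract] by (intro closed_iterates_in) auto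
  have level: "closed (?P \<inter> (\<lambda>z. norm ((f ^^ k) z)) -` {\<mu> k - \<epsilon> m..})" if "k \<le> Suc m" for k
    using direct_tractD(4)[OF tract] P that
    by (intro continuous_closed_preimage continuous_on_norm continuous_on_funpow_iterates_in) auto
  have eq: "A_approx m = ?P \<inter> (\<Inter>k\<in>{1..Suc m}. ?P \<inter> (\<lambda>z. norm ((f ^^ k) z)) -` {\<mu> k - \<epsilon> m..})"
    by (auto simp: A_approx_def)
  show ?thesis
    unfolding eq by (rule closed_Int[OF P closed_INT]) (use level in auto)
qed

lemma A_approx_antimono:
  assumes "m \<le> n"
  shows "A_approx n \<subseteq> A_approx m"
proof
  fix z assume z: "z \<in> A_approx n"
  then have "z \<in> iterates_in f (closure D) m"
    using iterates_in_antimono[OF assms, of f "closure D"] unfolding A_approx_def by blast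
  moreover have "\<mu> k - \<epsilon> m \<le> norm ((f ^^ k) z)" if "k \<in> {1..Suc m}" for k
  proof -
    have "\<mu> k - \<epsilon> n \<le> norm ((f ^^ k) z)"
      using z that assms unfolding A_approx_def by auto
    then show ?thesis using \<epsilon>_antimono[OF assms] by linarith
  qed
  ultimately show "z \<in> A_approx m"
    by (simp add: A_approx_def)
qed

lemma Inter_A_approx: "(\<Inter>m. A_approx m) = A_tract f D \<rho>"
proof (intro equalityI subsetI)
  fix z assume z: "z \<in> (\<Inter>m. A_approx m)"
  have "\<mu> n \<le> norm ((f ^^ n) z)" if "n \<ge> 1" for n
  proof (rule tendsto_le[OF trivial_limit_sequentially tendsto_const])
    show "(\<lambda>m. \<mu> n - \<epsilon> m) \<longlonglongrightarrow> \<mu> n"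
      using tendsto_diff[OF tendsto_const \<epsilon>_tendsto_0] by simp
    show "\<forall>\<^sub>F m in sequentially. \<mu> n - \<epsilon> m \<le> norm ((f ^^ n) z)"
      using z that by (intro eventually_sequentiallyI[of n]) (force simp: A_approx_def)
  qed
  moreover have orbit: "(f ^^ n) z \<in> D" for n
    using A_approx_iterates_in_D[of z n] z by (auto simp: iterates_in_def)
  moreover have "z \<in> D"
    using orbit[of 0] by simp
  ultimately show "z \<in> A_tract f D \<rho>"
    by (auto simp: A_tract_def simp del: funpow.simps)
next
  fix z assume z: "z \<in> A_tract f D \<rho>"
  have "(f ^^ k) z \<in> D" for k
    using z by (cases k) (auto simp: A_tract_def simp del: funpow.simps)
  then have "z \<in> iterates_in f (closure D) m" for m
    using closure_subset unfolding iterates_in_def by blast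
  moreover have "\<mu> k - \<epsilon> m \<le> norm ((f ^^ k) z)" if "k \<in> {1..Suc m}" for k m
  proof -
    have "\<mu> k \<le> norm ((f ^^ k) z)"
      using z that by (auto simp: A_tract_def simp del: funpow.simps)
    then show ?thesis using \<epsilon>_pos[of m] by linarith
  qed
  ultimately show "z \<in> (\<Inter>m. A_approx m)"
    unfolding A_approx_def by blast
qed

lemma norm_iterate_less_\<mu>:
  assumes "norm ((f ^^ k) z) < \<mu> k" "\<And>j. j < d \<Longrightarrow> (f ^^ (k + j)) z \<in> D"
  shows "norm ((f ^^ (k + d)) z) < \<mu> (k + d)"
  using assms(2)
proof (induction d)
  case 0
  then show ?case using assms(1) by simp
next
  case (Suc d)
  then have "norm ((f ^^ (k + d)) z) < \<mu> (k + d)" "(f ^^ (k + d)) z \<in> D"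
    by simp_all
  then show ?case
    using direct_tract_norm_less_MD[OF tract R_less_MD_\<mu>] by simp
qed

definition A_nbhd :: "complex set \<Rightarrow> nat \<Rightarrow> complex set" where
  "A_nbhd U m = U \<inter> {z \<in> iterates_in f D m. \<forall>k\<in>{1..Suc m}. \<mu> k - \<epsilon> m < norm ((f ^^ k) z)}"

lemma open_A_nbhd:
  assumes "open U"
  shows "open (A_nbhd U m)"
proof -
  let ?P = "iterates_in f D m"
  have P: "open ?P"
    using direct_tractD(1,3)[OF tract] by (intro open_iterates_in holomorphic_on_imp_continuous_on)
  have level: "open (?P \<inter> (\<lambda>z. norm ((f ^^ k) z)) -` {\<mu> k - \<epsilon> m<..})" if "k \<le> Suc m" for k
    using direct_tractD(3)[OF tract] P that
    by (intro continuous_open_preimage continuous_on_norm holomorphic_on_imp_continuous_on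
        holomorphic_on_funpow_iterates_in) auto
  have eq: "A_nbhd U m = U \<inter> (?P \<inter> (\<Inter>k\<in>{1..Suc m}. ?P \<inter> (\<lambda>z. norm ((f ^^ k) z)) -` {\<mu> k - \<epsilon> m<..}))"
    by (auto simp: A_nbhd_def)
  show ?thesis
    unfolding eq by (rule open_Int[OF assms open_Int[OF P open_INT]]) (use level in auto)
qed

lemma A_nbhd_subset: "A_nbhd U m \<subseteq> U \<inter> A_approx m"
  using iterates_in_mono[OF closure_subset, of f D m] by (auto simp: A_nbhd_def A_approx_def)

lemma A_tract_subset_A_nbhd: "A_tract f D \<rho> \<inter> U \<subseteq> A_nbhd U m"
proof
  fix z assume z: "z \<in> A_tract f D \<rho> \<inter> U"
  then have "z \<in> (\<Inter>m. A_approx m)"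
    using Inter_A_approx by blast
  then have "z \<in> iterates_in f D m"
    using A_approx_iterates_in_D by blast
  moreover have "\<mu> k - \<epsilon> m < norm ((f ^^ k) z)" if "k \<in> {1..Suc m}" for k
  proof -
    have "\<mu> k \<le> norm ((f ^^ k) z)"
      using z that by (auto simp: A_tract_def simp del: funpow.simps)
    then show ?thesis using \<epsilon>_pos[of m] by linarith
  qed
  ultimately show "z \<in> A_nbhd U m"
    using z by (simp add: A_nbhd_def)
qed

text \<open>A frontier point of a component of \<open>A_nbhd U m\<close> lies in \<open>A_approx m\<close>, hence in \<open>U\<close>,
  so it violates one of the strict inequalities; the strict maximum modulus bound
  then carries \<open>|f\<^sup>k(z)| < \<mu> k\<close> forward to \<open>k = m + 1\<close>.\<close>
lemma norm_iterate_less_\<mu>_on_frontier: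
  assumes "open U" "frontier U \<inter> A_approx m = {}"
    and z: "z \<in> frontier (connected_component_set (A_nbhd U m) z0)"
  shows "norm ((f ^^ Suc m) z) < \<mu> (Suc m)"
proof -
  let ?W = "connected_component_set (A_nbhd U m) z0"
  have "?W \<subseteq> U" "?W \<subseteq> A_approx m"
    using A_nbhd_subset[of U m] connected_component_subset[of "A_nbhd U m" z0] by auto
  moreover have "z \<in> closure ?W"
    using z by (simp add: frontier_def)
  ultimately have zU: "z \<in> closure U" and zA: "z \<in> A_approx m"
    using closure_mono closure_minimal[OF _ closed_A_approx] by blast+
  then have "z \<in> U"
    using assms(1,2) by (auto simp: frontier_def interior_open)
  moreover have "z \<notin> A_nbhd U m"
    using z frontier_of_connected_component_subset open_A_nbhd[OF assms(1)]
    by (fastforce simp: frontier_def interior_open)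
  moreover have orbit: "z \<in> iterates_in f D m"
    using A_approx_iterates_in_D[OF zA] .
  ultimately obtain k where k: "k \<in> {1..Suc m}" "norm ((f ^^ k) z) \<le> \<mu> k - \<epsilon> m"
    by (force simp: A_nbhd_def)
  have "norm ((f ^^ (k + (Suc m - k))) z) < \<mu> (k + (Suc m - k))"
  proof (rule norm_iterate_less_\<mu>)
    show "norm ((f ^^ k) z) < \<mu> k" using k \<epsilon>_pos[of m] by linarith
    show "(f ^^ (k + j)) z \<in> D" if "j < Suc m - k" for j
      using orbit that by (simp add: iterates_in_def)
  qed
  with k show ?thesis by simp
qed

lemma components_A_tract_unbounded:
  assumes C: "C \<in> components (A_tract f D \<rho>)"
  shows "\<not> bounded C"
proof
  assume "bounded C"
  let ?A = "A_tract f D \<rho>"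
  have "closed ?A"
    unfolding Inter_A_approx[symmetric] using closed_A_approx by blast
  moreover have "compact C"
    using \<open>bounded C\<close> closed_components[OF \<open>closed ?A\<close> C] by (simp add: compact_eq_bounded_closed)
  ultimately obtain U where U: "open U" "bounded U" "C \<subseteq> U" "frontier U \<inter> ?A = {}"
    using compact_component_separated C by blast
  have "frontier U \<inter> (\<Inter>m. A_approx m) = {}"
    using U(4) Inter_A_approx by simp
  from compact_disjoint_from_some_nest[OF compact_frontier_bounded[OF U(2)] closed_A_approx
      A_approx_antimono this]
  obtain m where m: "frontier U \<inter> A_approx m = {}" .
  obtain z0 where "z0 \<in> C"
    using C in_components_nonempty by blast
  then have z0: "z0 \<in> ?A" "z0 \<in> U"
    using C U(3) in_components_subset by blast+
  let ?W = "connected_component_set (A_nbhd U m) z0"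
  have W: "?W \<subseteq> U" "?W \<subseteq> iterates_in f D m" "?W \<subseteq> A_approx m"
    using A_nbhd_subset[of U m] connected_component_subset[of "A_nbhd U m" z0]
    by (auto simp: A_nbhd_def)
  have "norm ((f ^^ Suc m) z0) < \<mu> (Suc m)"
  proof (rule maximum_modulus_frontier_less[of "f ^^ Suc m" ?W])
    show "(f ^^ Suc m) holomorphic_on ?W"
      using direct_tractD(3)[OF tract] holomorphic_on_funpow_iterates_in holomorphic_on_subset W(2)
      by blast
    show "continuous_on (closure ?W) (f ^^ Suc m)"
      using direct_tractD(4)[OF tract] closure_minimal[OF W(3) closed_A_approx]
        continuous_on_funpow_iterates_in[of "closure D" f "Suc m" m] A_approx_def
      by (auto intro: continuous_on_subset)
    show "open ?W" "bounded ?W" "z0 \<in> ?W"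
      using open_A_nbhd[OF U(1)] bounded_subset[OF U(2) W(1)] A_tract_subset_A_nbhd z0
      by (auto simp: open_connected_component)
  qed (use norm_iterate_less_\<mu>_on_frontier[OF U(1) m] in blast)
  moreover have "\<mu> (Suc m) \<le> norm ((f ^^ Suc m) z0)"
    using z0(1) by (auto simp: A_tract_def simp del: funpow.simps)
  ultimately show False by simp
qed

end

theorem theorem3p3:
  fixes f :: "complex \<Rightarrow> complex" and D :: "complex set" and R \<rho>0 :: real
  assumes "direct_tract f D R"
    and "\<rho>0 > R"
    and "\<forall>\<rho>. \<rho> > \<rho>0 \<longrightarrow> MD f D \<rho> > \<rho>"
  shows "\<forall>\<rho>. \<rho> > \<rho>0 \<longrightarrow> (\<forall>C \<in> components (A_tract f D \<rho>). \<not> bounded C)"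
proof (intro allI impI ballI)
  fix \<rho> C
  assume "\<rho> > \<rho>0" and C: "C \<in> components (A_tract f D \<rho>)"
  then interpret tract_escape f D R \<rho>0 \<rho>
    using assms by unfold_locales auto
  show "\<not> bounded C"
    using components_A_tract_unbounded[OF C] .
qed

end
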